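(* Let $X$ be a $k$-dimensional complex with vertex set $[n]$ and complete $(k-1)$-skeleton, and let $b\in B^{k-1}(X)$. For $F\in X_{k-2}$ define $h_b(F):=\sum_{v\notin F}[F\cup\{v\}:F]\,b(F\cup\{v\})$. Fix $d>0$ and let $E=D_{k-1}(X)-dI$. Then: (a) $b(H)=\frac1n\sum_{F\in X_{k-2},\,F\subset H}[H:F]\,h_b(F)$ for every $H\in X_{k-1}$; (b) $\langle Eb,Eb\rangle\le\frac{k}{n^2}\sum_{F\in X_{k-2}}h_b(F)^2\langle E\delta_{k-2}e_F,E\delta_{k-2}e_F\rangle$; (c) $\sum_{F\in X_{k-2}}h_b(F)^2\le k(n-k+1)\langle b,b\rangle$.
   Context: Standard Euclidean inner product. Complexes have linearly ordered vertex sets; $X_i$ is the set of $i$-faces; $[F:G]$ is the oriented incidence number ($(-1)^j$ if $F\setminus G=\{v_j\}$, $F=\{v_0<\dots<v_i\}$; $0$ if $G\not\subseteq F$). Complete $(k-1)$-skeleton: every vertex set of size at most $k$ is a face. $(\delta_{k-2}f)(H)=\sum_{G}[H:G]f(G)$, $B^{k-1}(X)=\operatorname{im}\delta_{k-2}$, $e_F$ the indicator cochain of $F$. $D_{k-1}(X)$ is the diagonal matrix with entry $\deg(F)$ (number of $k$-faces containing $F$) at $F\in X_{k-1}$. *)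

theory Defs
  imports Complex_Main
begin

text \<open>Complexes on vertex set [n] = {0..<n} (natural order); faces are finite sets of
 vertices; an i-face has i+1 vertices, so X_i = faces X (i+1).\<close>

definition faces :: "nat set set \<Rightarrow> nat \<Rightarrow> nat set set" where
  "faces X m = {F \<in> X. card F = m}"

definition simplicial_complex :: "nat \<Rightarrow> nat set set \<Rightarrow> bool" where
  "simplicial_complex n X \<longleftrightarrow> X \<subseteq> Pow {0..<n} \<and> {} \<in> X \<and>
     (\<forall>F \<in> X. \<forall>G. G \<subseteq> F \<longrightarrow> G \<in> X)"

definition dim_complex :: "nat \<Rightarrow> nat set set \<Rightarrow> nat \<Rightarrow> bool" where
  "dim_complex n X k \<longleftrightarrow> simplicial_complex n X \<and>
     (\<forall>F \<in> X. card F \<le> k + 1) \<and> (\<exists>F \<in> X. card F = k + 1)"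

definition complete_skeleton :: "nat \<Rightarrow> nat set set \<Rightarrow> nat \<Rightarrow> bool" where
  "complete_skeleton n X k \<longleftrightarrow> (\<forall>S. S \<subseteq> {0..<n} \<and> card S \<le> k \<longrightarrow> S \<in> X)"

text \<open>Oriented incidence number [F:G]: (-1)^j if F - G = {v_j}, j the position of v
 in the increasing enumeration of F (starting at 0), and 0 otherwise.\<close>
definition incid :: "nat set \<Rightarrow> nat set \<Rightarrow> real" where
  "incid F G = (if G \<subseteq> F \<and> card (F - G) = 1
      then (-1) ^ card {u \<in> F. u < the_elem (F - G)} else 0)"

text \<open>Coboundary from (m-1)-cochains (on faces X m) to m-cochains (on faces X (m+1)).\<close>
definition coboundary :: "nat set set \<Rightarrow> nat \<Rightarrow> (nat set \<Rightarrow> real) \<Rightarrow> nat set \<Rightarrow> real" where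
  "coboundary X m f H = (\<Sum>G \<in> faces X m. incid H G * f G)"

definition inner_cochain :: "nat set set \<Rightarrow> nat \<Rightarrow> (nat set \<Rightarrow> real) \<Rightarrow> (nat set \<Rightarrow> real) \<Rightarrow> real" where
  "inner_cochain X m u v = (\<Sum>H \<in> faces X m. u H * v H)"

definition deg :: "nat set set \<Rightarrow> nat set \<Rightarrow> nat" where
  "deg X F = card {S \<in> X. card S = card F + 1 \<and> F \<subseteq> S}"

definition indic :: "nat set \<Rightarrow> nat set \<Rightarrow> real" where
  "indic F G = (if G = F then 1 else 0)"

text \<open>B^{k-1}(X): image of delta_{k-2}, cochains on X_{k-1} = faces X k.\<close>
definition coboundaries :: "nat set set \<Rightarrow> nat \<Rightarrow> (nat set \<Rightarrow> real) set" where
  "coboundaries X k = {b. \<exists>f. \<forall>H \<in> faces X k. b H = coboundary X (k - 1) f H}"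

definition hb :: "nat \<Rightarrow> (nat set \<Rightarrow> real) \<Rightarrow> nat set \<Rightarrow> real" where
  "hb n b F = (\<Sum>v \<in> {0..<n} - F. incid (insert v F) F * b (insert v F))"

definition Eop :: "nat set set \<Rightarrow> real \<Rightarrow> (nat set \<Rightarrow> real) \<Rightarrow> nat set \<Rightarrow> real" where
  "Eop X d g H = (real (deg X H) - d) * g H"

end

theory Submission
  imports Defs "HOL-Analysis.Convex"
begin

text \<open>Write \<open>b = \<delta>f\<close>. Expanding each \<open>h\<^sub>b(H - {u})\<close> gives one term \<open>b(H)\<close> for the
  vertex \<open>u\<close> itself, plus terms \<open>b(H - {u} + {v})\<close> for \<open>v \<notin> H\<close>; for fixed \<open>v\<close> the latter
  add up to \<open>b(H)\<close> by the cocycle identity \<open>\<delta>b = 0\<close> on \<open>H + {v}\<close>. So the \<open>k\<close> inner and \<open>n - k\<close>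
  outer vertices each contribute \<open>b(H)\<close>, which is (a). Parts (b) and (c) are Cauchy-Schwarz applied
  to the \<open>k\<close>-term sum in (a) and to the \<open>(n - k + 1)\<close>-term sum defining \<open>h\<^sub>b\<close>, followed by
  double counting of the pairs \<open>F \<subset> H\<close>.\<close>

definition position_sign :: "nat set \<Rightarrow> nat \<Rightarrow> real" where
  "position_sign A v = (-1) ^ card {x \<in> A. x < v}"

lemma position_sign_square [simp]: "position_sign A v * position_sign A v = 1"
  by (simp add: position_sign_def flip: power_mult_distrib)

lemma power2_position_sign_mult [simp]: "(position_sign A v * x)\<^sup>2 = x\<^sup>2"
  by (simp add: power2_eq_square algebra_simps)

lemma position_sign_Diff_self [simp]: "position_sign (A - {v}) v = position_sign A v"
  unfolding position_sign_def by (rule arg_cong[where f = "\<lambda>S. (-1) ^ card S"]) auto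

lemma position_sign_insert_self [simp]: "position_sign (insert v A) v = position_sign A v"
  unfolding position_sign_def by (rule arg_cong[where f = "\<lambda>S. (-1) ^ card S"]) auto

lemma incid_Diff_singleton: "u \<in> H \<Longrightarrow> incid H (H - {u}) = position_sign H u"
  by (simp add: incid_def position_sign_def Diff_Diff_Int Int_absorb1)

lemma incid_insert: "v \<notin> A \<Longrightarrow> incid (insert v A) A = position_sign A v"
  using incid_Diff_singleton[of v "insert v A"] by simp

lemma incid_eq_0: "(\<And>u. u \<in> H \<Longrightarrow> G \<noteq> H - {u}) \<Longrightarrow> incid H G = 0"
  unfolding incid_def by (auto simp: card_1_singleton_iff)

lemma position_sign_swap:
  assumes "w \<in> K" "u \<in> K" "w \<noteq> u"
  shows "position_sign K w * position_sign (K - {w}) u = - (position_sign K u * position_sign (K - {u}) w)"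
proof -
  have less: "position_sign K w * position_sign (K - {w}) u = - (position_sign K u * position_sign (K - {u}) w)"
    if "w \<in> K" "u \<in> K" "w < u" for w u
  proof -
    have "{x \<in> K. x < u} = insert w {x \<in> K - {w}. x < u}" "{x \<in> K - {u}. x < w} = {x \<in> K. x < w}"
      using that by auto
    moreover have "finite {x \<in> K - {w}. x < u}"
      by (rule finite_subset[of _ "{..<u}"]) auto
    ultimately show ?thesis
      by (simp add: position_sign_def)
  qed
  show ?thesis
    using assms less[of w u] less[of u w] by (cases "w < u") auto
qed

lemma sum_incid_eq_sum_facets:
  assumes "finite S" "(\<lambda>u. H - {u}) ` H \<subseteq> S"
  shows "(\<Sum>G\<in>S. incid H G * g G) = (\<Sum>u\<in>H. position_sign H u * g (H - {u}))"
proof -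
  have "(\<Sum>G\<in>S. incid H G * g G) = (\<Sum>G\<in>(\<lambda>u. H - {u}) ` H. incid H G * g G)"
    using assms by (intro sum.mono_neutral_right) (auto intro!: incid_eq_0)
  also have "\<dots> = (\<Sum>u\<in>H. incid H (H - {u}) * g (H - {u}))"
    by (rule sum.reindex[unfolded comp_def]) (auto simp: inj_on_def)
  also have "\<dots> = (\<Sum>u\<in>H. position_sign H u * g (H - {u}))"
    by (rule sum.cong) (auto simp: incid_Diff_singleton)
  finally show ?thesis .
qed

text \<open>The local form of \<open>\<delta>\<delta> = 0\<close>: each term \<open>f (K - {w} - {u})\<close> appears twice,
  once for \<open>(w, u)\<close> and once for \<open>(u, w)\<close>, with opposite signs.\<close>
lemma alternating_sum_coboundary_eq_0:
  assumes "finite K"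
    and b: "\<And>w. w \<in> K \<Longrightarrow>
      b (K - {w}) = (\<Sum>u\<in>K - {w}. position_sign (K - {w}) u * f (K - {w} - {u}))"
  shows "(\<Sum>w\<in>K. position_sign K w * b (K - {w})) = 0"
proof -
  define t where "t = (\<lambda>(w, u). position_sign K w * position_sign (K - {w}) u * f (K - {w} - {u}))"
  define P where "P = (SIGMA w:K. K - {w})"
  have "(\<Sum>w\<in>K. position_sign K w * b (K - {w})) = (\<Sum>w\<in>K. \<Sum>u\<in>K - {w}. t (w, u))"
    by (rule sum.cong) (simp_all add: b t_def sum_distrib_left mult.assoc)
  also have "\<dots> = (\<Sum>p\<in>P. t p)"
    unfolding P_def using assms(1) by (subst sum.Sigma) auto
  finally have sum_eq: "(\<Sum>w\<in>K. position_sign K w * b (K - {w})) = (\<Sum>p\<in>P. t p)" .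
  have "(\<Sum>p\<in>P. t p) = (\<Sum>p\<in>P. t (snd p, fst p))"
    by (rule sum.reindex_bij_witness[where i = prod.swap and j = prod.swap]) (auto simp: P_def)
  also have "\<dots> = - (\<Sum>p\<in>P. t p)"
  proof -
    have "t (u, w) = - t (w, u)" if "(w, u) \<in> P" for w u
    proof -
      have "K - {u} - {w} = K - {w} - {u}" by auto
      then show ?thesis
        using that position_sign_swap[of w K u] by (simp add: P_def t_def)
    qed
    then show ?thesis
      by (simp add: sum_negf[symmetric] split_paired_all cong: sum.cong)
  qed
  finally show ?thesis
    using sum_eq by simp
qed

lemma sum_subsets_insert:
  fixes g :: "'a set \<Rightarrow> real"
  assumes "1 \<le> k" "finite V"
  shows "(\<Sum>F\<in>{S. S \<subseteq> V \<and> card S = k - 1}. \<Sum>v\<in>V - F. g (insert v F))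
       = real k * (\<Sum>H\<in>{S. S \<subseteq> V \<and> card S = k}. g H)"
proof -
  have fin: "finite {S. S \<subseteq> V \<and> card S = m}" for m
    using assms(2) by simp
  have "(\<Sum>F\<in>{S. S \<subseteq> V \<and> card S = k - 1}. \<Sum>v\<in>V - F. g (insert v F))
      = (\<Sum>(F, v)\<in>(SIGMA F:{S. S \<subseteq> V \<and> card S = k - 1}. V - F). g (insert v F))"
    using fin assms(2) by (subst sum.Sigma) auto
  also have "\<dots> = (\<Sum>(H, v)\<in>(SIGMA H:{S. S \<subseteq> V \<and> card S = k}. H). g H)"
  proof (rule sum.reindex_bij_witness[where i = "\<lambda>(H, v). (H - {v}, v)" and j = "\<lambda>(F, v). (insert v F, v)"])
    show "(\<lambda>(F, v). (insert v F, v)) p \<in> (SIGMA H:{S. S \<subseteq> V \<and> card S = k}. H)"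
      if "p \<in> (SIGMA F:{S. S \<subseteq> V \<and> card S = k - 1}. V - F)" for p
      using that assms finite_subset[OF _ assms(2)] by (auto simp: card_insert_if)
    show "(\<lambda>(H, v). (H - {v}, v)) p \<in> (SIGMA F:{S. S \<subseteq> V \<and> card S = k - 1}. V - F)"
      if "p \<in> (SIGMA H:{S. S \<subseteq> V \<and> card S = k}. H)" for p
      using that finite_subset[OF _ assms(2)] by auto
  qed auto
  also have "\<dots> = (\<Sum>H\<in>{S. S \<subseteq> V \<and> card S = k}. real k * g H)"
    using fin assms(2) by (subst sum.Sigma[symmetric]) (auto intro: finite_subset)
  finally show ?thesis
    by (simp add: sum_distrib_left)
qed

lemma facets_in_subsets:
  assumes "finite V" "H \<subseteq> V" "card H = k"
  shows "(\<lambda>u. H - {u}) ` H \<subseteq> {S. S \<subseteq> V \<and> card S = k - 1}"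
  using assms finite_subset[OF assms(2,1)] by auto

lemma hb_eq: "hb n b F = (\<Sum>v\<in>{0..<n} - F. position_sign F v * b (insert v F))"
  unfolding hb_def by (rule sum.cong) (auto simp: incid_insert)

lemma position_sign_mult_hb_Diff:
  assumes "u \<in> H" "H \<subseteq> {0..<n}"
  shows "position_sign H u * hb n b (H - {u}) = b H +
    (\<Sum>v\<in>{0..<n} - H. position_sign H u * position_sign (H - {u}) v * b (insert v (H - {u})))"
proof -
  have "{0..<n} - (H - {u}) = insert u ({0..<n} - H)" "u \<notin> {0..<n} - H"
    using assms by auto
  then have "hb n b (H - {u}) = position_sign (H - {u}) u * b (insert u (H - {u})) +
      (\<Sum>v\<in>{0..<n} - H. position_sign (H - {u}) v * b (insert v (H - {u})))"
    unfolding hb_eq by simp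
  also have "insert u (H - {u}) = H"
    using assms(1) by auto
  finally have "hb n b (H - {u}) = position_sign (H - {u}) u * b H +
      (\<Sum>v\<in>{0..<n} - H. position_sign (H - {u}) v * b (insert v (H - {u})))" .
  then show ?thesis
    by (simp add: algebra_simps sum_distrib_left)
qed

lemma sum_facets_insert_eq:
  assumes "finite H" "v \<notin> H"
    and cob: "\<And>w. w \<in> insert v H \<Longrightarrow> b (insert v H - {w}) =
      (\<Sum>u\<in>insert v H - {w}. position_sign (insert v H - {w}) u * f (insert v H - {w} - {u}))"
  shows "(\<Sum>u\<in>H. position_sign H u * position_sign (H - {u}) v * b (insert v (H - {u}))) = b H"
proof -
  define K where "K = insert v H"
  have K_Diff_v: "K - {v} = H"
    using assms(2) by (auto simp: K_def)
  have K_Diff: "K - {u} = insert v (H - {u})" if "u \<in> H" for u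
    using assms(2) that by (auto simp: K_def)
  have "(\<Sum>w\<in>K. position_sign K w * b (K - {w})) = 0"
    using alternating_sum_coboundary_eq_0[of K b f] assms(1) cob by (simp add: K_def)
  then have alt: "(\<Sum>u\<in>H. position_sign K u * b (K - {u})) = - position_sign K v * b H"
    using assms(1,2) K_Diff_v by (simp add: K_def)
  have swap: "position_sign H u * position_sign (H - {u}) v = - position_sign K v * position_sign K u"
    if "u \<in> H" for u
  proof -
    have "position_sign K u * position_sign (H - {u}) v = - (position_sign K v * position_sign H u)"
      using position_sign_swap[of u K v] that assms(2) K_Diff[OF that] K_Diff_v by (auto simp: K_def)
    then show ?thesis
      using position_sign_square[of K u] position_sign_square[of H u] by algebra
  qed
  have "(\<Sum>u\<in>H. position_sign H u * position_sign (H - {u}) v * b (insert v (H - {u})))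
      = - position_sign K v * (\<Sum>u\<in>H. position_sign K u * b (K - {u}))"
    by (simp add: sum_distrib_left swap K_Diff mult.assoc)
  also have "\<dots> = b H"
    unfolding alt using position_sign_square[of K v] by (simp add: algebra_simps)
  finally show ?thesis .
qed

lemma sum_facets_hb_eq:
  assumes "H \<subseteq> {0..<n}"
    and cob: "\<And>G. G \<subseteq> {0..<n} \<Longrightarrow> card G = card H \<Longrightarrow>
      b G = (\<Sum>u\<in>G. position_sign G u * f (G - {u}))"
  shows "(\<Sum>u\<in>H. position_sign H u * hb n b (H - {u})) = real n * b H"
proof -
  have fin: "finite H"
    using assms(1) finite_subset by blast
  have cob_insert: "b (insert v H - {w}) = (\<Sum>u\<in>insert v H - {w}.
      position_sign (insert v H - {w}) u * f (insert v H - {w} - {u}))"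
    if "v \<in> {0..<n} - H" "w \<in> insert v H" for v w
    using that assms(1) fin by (intro cob) auto
  have "(\<Sum>u\<in>H. position_sign H u * hb n b (H - {u})) = real (card H) * b H +
      (\<Sum>v\<in>{0..<n} - H. \<Sum>u\<in>H. position_sign H u * position_sign (H - {u}) v * b (insert v (H - {u})))"
    using assms(1) by (simp add: position_sign_mult_hb_Diff sum.distrib sum.swap[of _ H])
  also have "\<dots> = real (card H) * b H + real (card ({0..<n} - H)) * b H"
    using sum_facets_insert_eq[OF fin _ cob_insert] by simp
  also have "\<dots> = real n * b H"
    using assms(1) fin card_mono[OF _ assms(1)]
    by (simp add: card_Diff_subset of_nat_diff algebra_simps)
  finally show ?thesis .
qed

lemma sum_hb_square_le:
  assumes "1 \<le> k" "k \<le> n"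
  shows "(\<Sum>F\<in>{S. S \<subseteq> {0..<n} \<and> card S = k - 1}. (hb n b F)\<^sup>2)
    \<le> real k * real (n - k + 1) * (\<Sum>H\<in>{S. S \<subseteq> {0..<n} \<and> card S = k}. (b H)\<^sup>2)"
proof -
  have "(hb n b F)\<^sup>2 \<le> real (n - k + 1) * (\<Sum>v\<in>{0..<n} - F. (b (insert v F))\<^sup>2)"
    if "F \<subseteq> {0..<n}" "card F = k - 1" for F
  proof -
    have "card ({0..<n} - F) = n - k + 1"
      using that assms finite_subset[OF that(1)] by (simp add: card_Diff_subset)
    then show ?thesis
      using sum_squared_le_sum_of_squares[of "\<lambda>v. position_sign F v * b (insert v F)" "{0..<n} - F"]
      by (simp add: hb_eq mult.commute)
  qed
  then have "(\<Sum>F\<in>{S. S \<subseteq> {0..<n} \<and> card S = k - 1}. (hb n b F)\<^sup>2) \<le>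
      (\<Sum>F\<in>{S. S \<subseteq> {0..<n} \<and> card S = k - 1}. real (n - k + 1) * (\<Sum>v\<in>{0..<n} - F. (b (insert v F))\<^sup>2))"
    by (intro sum_mono) simp
  also have "\<dots> = real k * real (n - k + 1) * (\<Sum>H\<in>{S. S \<subseteq> {0..<n} \<and> card S = k}. (b H)\<^sup>2)"
    using sum_subsets_insert[OF assms(1), of "{0..<n}" "\<lambda>H. (b H)\<^sup>2"] by (simp flip: sum_distrib_left)
  finally show ?thesis .
qed

lemma weighted_sum_square_le:
  fixes b h e :: "nat set \<Rightarrow> real"
  assumes "finite V" "c \<noteq> 0"
    and e: "\<And>H. H \<subseteq> V \<Longrightarrow> card H = k \<Longrightarrow> e H \<ge> 0"
    and b: "\<And>H. H \<subseteq> V \<Longrightarrow> card H = k \<Longrightarrow>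
      c * b H = (\<Sum>u\<in>H. position_sign H u * h (H - {u}))"
  shows "(\<Sum>H\<in>{S. S \<subseteq> V \<and> card S = k}. e H * (b H)\<^sup>2) \<le> real k / c\<^sup>2 *
    (\<Sum>F\<in>{S. S \<subseteq> V \<and> card S = k - 1}. (h F)\<^sup>2 *
      (\<Sum>H\<in>{S. S \<subseteq> V \<and> card S = k}. e H * (incid H F)\<^sup>2))"
proof -
  have facet_sum: "(\<Sum>F\<in>{S. S \<subseteq> V \<and> card S = k - 1}. (incid H F)\<^sup>2 * (h F)\<^sup>2)
      = (\<Sum>u\<in>H. (h (H - {u}))\<^sup>2)" if "H \<subseteq> V" "card H = k" for H
  proof -
    have "(\<Sum>F\<in>{S. S \<subseteq> V \<and> card S = k - 1}. incid H F * (incid H F * (h F)\<^sup>2))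
        = (\<Sum>u\<in>H. position_sign H u * (incid H (H - {u}) * (h (H - {u}))\<^sup>2))"
      using assms(1) facets_in_subsets[OF assms(1) that] by (intro sum_incid_eq_sum_facets) simp_all
    then show ?thesis
      by (simp add: power2_eq_square incid_Diff_singleton mult.assoc[symmetric] cong: sum.cong)
  qed
  have "e H * (b H)\<^sup>2 \<le> real k / c\<^sup>2 * (e H * (\<Sum>u\<in>H. (h (H - {u}))\<^sup>2))"
    if "H \<subseteq> V" "card H = k" for H
  proof -
    have "(c * b H)\<^sup>2 \<le> real k * (\<Sum>u\<in>H. (h (H - {u}))\<^sup>2)"
      using sum_squared_le_sum_of_squares[of "\<lambda>u. position_sign H u * h (H - {u})" H]
      by (simp add: b[OF that] that(2) mult.commute)
    then have "(b H)\<^sup>2 \<le> real k / c\<^sup>2 * (\<Sum>u\<in>H. (h (H - {u}))\<^sup>2)"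
      using assms(2) by (simp add: power_mult_distrib field_simps)
    then have "e H * (b H)\<^sup>2 \<le> e H * (real k / c\<^sup>2 * (\<Sum>u\<in>H. (h (H - {u}))\<^sup>2))"
      using e[OF that] by (rule mult_left_mono)
    then show ?thesis
      by (simp add: algebra_simps)
  qed
  then have "(\<Sum>H\<in>{S. S \<subseteq> V \<and> card S = k}. e H * (b H)\<^sup>2) \<le> real k / c\<^sup>2 *
      (\<Sum>H\<in>{S. S \<subseteq> V \<and> card S = k}. e H * (\<Sum>u\<in>H. (h (H - {u}))\<^sup>2))"
    unfolding sum_distrib_left[of "real k / c\<^sup>2"] by (intro sum_mono) simp
  also have "(\<Sum>H\<in>{S. S \<subseteq> V \<and> card S = k}. e H * (\<Sum>u\<in>H. (h (H - {u}))\<^sup>2))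
      = (\<Sum>H\<in>{S. S \<subseteq> V \<and> card S = k}. \<Sum>F\<in>{S. S \<subseteq> V \<and> card S = k - 1}.
          e H * ((incid H F)\<^sup>2 * (h F)\<^sup>2))"
    by (rule sum.cong) (use facet_sum in \<open>simp_all flip: sum_distrib_left\<close>)
  also have "\<dots> = (\<Sum>F\<in>{S. S \<subseteq> V \<and> card S = k - 1}. (h F)\<^sup>2 *
      (\<Sum>H\<in>{S. S \<subseteq> V \<and> card S = k}. e H * (incid H F)\<^sup>2))"
    by (subst sum.swap) (simp add: sum_distrib_left algebra_simps)
  finally show ?thesis .
qed

lemma faces_eq_subsets:
  assumes "dim_complex n X k" "complete_skeleton n X k" "m \<le> k"
  shows "faces X m = {S. S \<subseteq> {0..<n} \<and> card S = m}"
  using assms unfolding faces_def dim_complex_def simplicial_complex_def complete_skeleton_def by auto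

lemma dim_complex_less:
  assumes "dim_complex n X k"
  shows "k < n"
proof -
  obtain F where "F \<subseteq> {0..<n}" "card F = k + 1"
    using assms unfolding dim_complex_def simplicial_complex_def by auto
  then show ?thesis
    using card_mono[of "{0..<n}" F] by simp
qed

lemma coboundary_indic:
  "finite (faces X m) \<Longrightarrow> F \<in> faces X m \<Longrightarrow> coboundary X m (indic F) H = incid H F"
  unfolding coboundary_def indic_def by (simp add: if_distrib cong: if_cong)

lemma inner_cochain_Eop:
  "inner_cochain X m (Eop X d g) (Eop X d g) = (\<Sum>H\<in>faces X m. (real (deg X H) - d)\<^sup>2 * (g H)\<^sup>2)"
  unfolding inner_cochain_def Eop_def by (simp add: power2_eq_square algebra_simps)

lemma coboundary_eq_sum_facets_hb:
  assumes "1 \<le> k" "dim_complex n X k" "complete_skeleton n X k" "b \<in> coboundaries X k"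
    and "H \<in> faces X k"
  shows "real n * b H = (\<Sum>u\<in>H. position_sign H u * hb n b (H - {u}))"
proof -
  have faces_k: "faces X k = {S. S \<subseteq> {0..<n} \<and> card S = k}"
    and faces_k1: "faces X (k - 1) = {S. S \<subseteq> {0..<n} \<and> card S = k - 1}"
    using faces_eq_subsets[OF assms(2,3)] by simp_all
  obtain f where "\<forall>H \<in> faces X k. b H = coboundary X (k - 1) f H"
    using assms(4) unfolding coboundaries_def by blast
  then have "b G = (\<Sum>u\<in>G. position_sign G u * f (G - {u}))" if "G \<subseteq> {0..<n}" "card G = k" for G
    using that sum_incid_eq_sum_facets[OF _ facets_in_subsets[OF _ that], where g = f]
    unfolding coboundary_def faces_k faces_k1 by simp
  then show ?thesis
    using assms(5) sum_facets_hb_eq[of H n b f] by (simp add: faces_k)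
qed

theorem lemma3p8:
  fixes n k :: nat and X :: "nat set set" and b :: "nat set \<Rightarrow> real" and d :: real
  assumes "1 \<le> k"
    and "dim_complex n X k"
    and "complete_skeleton n X k"
    and "b \<in> coboundaries X k"
    and "d > 0"
  shows "(\<forall>H \<in> faces X k. b H = 1 / real n *
            ((\<Sum>F \<in> {F \<in> faces X (k - 1). F \<subset> H}. incid H F * hb n b F))) \<and>
        (inner_cochain X k (Eop X d b) (Eop X d b) \<le> real k / (real n)^2 *
            (\<Sum>F \<in> faces X (k - 1). (hb n b F)^2 *
               inner_cochain X k (Eop X d (coboundary X (k - 1) (indic F)))
                                 (Eop X d (coboundary X (k - 1) (indic F))))) \<and>
        ((\<Sum>F \<in> faces X (k - 1). (hb n b F)^2) \<le> real k * real (n - k + 1) * inner_cochain X k b b)"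
proof -
  have faces_k: "faces X k = {S. S \<subseteq> {0..<n} \<and> card S = k}"
    and faces_k1: "faces X (k - 1) = {S. S \<subseteq> {0..<n} \<and> card S = k - 1}"
    using faces_eq_subsets[OF assms(2,3)] by simp_all
  have finite_facets: "finite (faces X (k - 1))"
    unfolding faces_k1 by simp
  have "k < n"
    using assms(2) by (rule dim_complex_less)
  note recon = coboundary_eq_sum_facets_hb[OF assms(1-4)]
  have part_a: "b H = 1 / real n * (\<Sum>F \<in> {F \<in> faces X (k - 1). F \<subset> H}. incid H F * hb n b F)"
    if "H \<in> faces X k" for H
  proof -
    have "(\<lambda>u. H - {u}) ` H \<subseteq> {F \<in> faces X (k - 1). F \<subset> H}"
      using facets_in_subsets[of "{0..<n}" H k] assms(1) that unfolding faces_k1 by (auto simp: faces_k)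
    then have "(\<Sum>F \<in> {F \<in> faces X (k - 1). F \<subset> H}. incid H F * hb n b F) = real n * b H"
      using finite_facets by (simp add: sum_incid_eq_sum_facets recon[OF that])
    then show ?thesis
      using \<open>k < n\<close> by simp
  qed
  have part_b: "inner_cochain X k (Eop X d b) (Eop X d b) \<le> real k / (real n)^2 *
      (\<Sum>F \<in> faces X (k - 1). (hb n b F)^2 *
         inner_cochain X k (Eop X d (coboundary X (k - 1) (indic F)))
                           (Eop X d (coboundary X (k - 1) (indic F))))"
  proof -
    have "inner_cochain X k (Eop X d b) (Eop X d b) \<le> real k / (real n)^2 *
        (\<Sum>F \<in> faces X (k - 1). (hb n b F)^2 *
           (\<Sum>H\<in>faces X k. (real (deg X H) - d)\<^sup>2 * (incid H F)\<^sup>2))"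
      using weighted_sum_square_le[of "{0..<n}" "real n" k "\<lambda>H. (real (deg X H) - d)\<^sup>2" b "hb n b"]
        recon \<open>k < n\<close> unfolding faces_k1
      by (simp add: inner_cochain_Eop faces_k)
    also have "\<dots> = real k / (real n)^2 *
        (\<Sum>F \<in> faces X (k - 1). (hb n b F)^2 *
           inner_cochain X k (Eop X d (coboundary X (k - 1) (indic F)))
                             (Eop X d (coboundary X (k - 1) (indic F))))"
      using finite_facets by (simp only: inner_cochain_Eop coboundary_indic cong: sum.cong)
    finally show ?thesis .
  qed
  have part_c: "(\<Sum>F \<in> faces X (k - 1). (hb n b F)^2) \<le> real k * real (n - k + 1) * inner_cochain X k b b"
    using sum_hb_square_le[OF assms(1), of n b] \<open>k < n\<close> unfolding faces_k1
    by (simp add: inner_cochain_def faces_k power2_eq_square)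
  show ?thesis
    using part_a part_b part_c by blast
qed

end
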